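(* For every $n\ge 1$, the map $\Lambda_{\mathrm{poset}}$ is a bijection from $\mathcal{P}_n$ to $\mathcal{T}_n$, and its inverse is $\Xi_{\mathrm{poset}}$. (In particular $\Lambda_{\mathrm{poset}}(\Xi_{\mathrm{poset}}(T))=T$ for every $T\in\mathcal{T}_n$.)
   Context: For a finite set $S=\{x_1<\dots<x_n\}\subset\mathbb{R}$, define the partial order $\preceq_S$ on $[n]=\{1,\dots,n\}$ by $i\prec_S j$ iff $x_i+1<x_j$. A finite poset is a unit interval poset if it is isomorphic to $([n],\preceq_S)$ for some such $S$ (called a starting set). $\mathcal{P}_n$ denotes the set of unit interval posets with $n$ elements, up to isomorphism. A plane tree is either a single node, or a root node joined to a finite ordered (left-to-right) sequence of plane trees whose roots are its children; $\mathcal{T}_n$ is the set of plane trees with $n$ non-root nodes. The depth $d(u)$ of a node is its distance to the root. Map $\Lambda_{\mathrm{poset}}$: given $P=([n],\preceq_S)$ with $S=\{x_1<\dots<x_n\}$, set $x_0=x_1-2$ and build a tree with nodes $v_0,\dots,v_n$, root $v_0$, where for $i\in[n]$ the parent of $v_i$ is $v_j$ with $j\in\{0,\dots,n\}$ the largest index such that $x_j+1<x_i$; children of the same node are ordered left to right by decreasing index. This tree depends only on $\preceq_S$, and $\Lambda_{\mathrm{poset}}(P)$ is this tree. Map $\Xi_{\mathrm{poset}}$: given $T\in\mathcal{T}_n$, let $m$ be the maximal number of children of a node of $T$; for a non-root node $u$ let $c(u)=i$ if $u$ is the $i$-th child of its parent counted from right to left; with $u_0=\text{root},u_1,\dots,u_{d(u)}=u$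 the root-to-$u$ path, set $x_u=d(u)+\sum_{i=1}^{d(u)}c(u_i)(m+2)^{-i}$. With $S=\{x_u: u \text{ non-root}\}$ (an $n$-element set), $\Xi_{\mathrm{poset}}(T)=([n],\preceq_S)$. *)

theory Defs
  imports Main "HOL.Real"
begin

definition starting_sets :: "nat \<Rightarrow> real set set" where
  "starting_sets n = {S. finite S \<and> card S = n}"

definition xpt :: "real set \<Rightarrow> nat \<Rightarrow> real" where
  "xpt S i = (if i = 0 then sorted_list_of_set S ! 0 - 2
              else sorted_list_of_set S ! (i - 1))"

definition uip_order :: "nat \<Rightarrow> real set \<Rightarrow> (nat \<times> nat) set" where
  "uip_order n S = {(i, j). i \<in> {1..n} \<and> j \<in> {1..n} \<and> (i = j \<or> xpt S i + 1 < xpt S j)}"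

definition poset_iso :: "nat \<Rightarrow> (nat \<times> nat) set \<Rightarrow> (nat \<times> nat) set \<Rightarrow> bool" where
  "poset_iso n R R' \<longleftrightarrow> (\<exists>f. bij_betw f {1..n} {1..n} \<and>
      (\<forall>i\<in>{1..n}. \<forall>j\<in>{1..n}. (i, j) \<in> R \<longleftrightarrow> (f i, f j) \<in> R'))"

definition unit_interval_orders :: "nat \<Rightarrow> (nat \<times> nat) set set" where
  "unit_interval_orders n = {uip_order n S | S. S \<in> starting_sets n}"

definition iso_rel :: "nat \<Rightarrow> ((nat \<times> nat) set \<times> (nat \<times> nat) set) set" where
  "iso_rel n = {(R, R'). R \<in> unit_interval_orders n \<and> R' \<in> unit_interval_orders n \<and> poset_iso n R R'}"

definition Pn :: "nat \<Rightarrow> (nat \<times> nat) set set set" where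
  "Pn n = unit_interval_orders n // iso_rel n"

datatype ptree = Node "ptree list"

fun nnodes :: "ptree \<Rightarrow> nat" where
  "nnodes (Node ts) = sum_list (map (\<lambda>t. 1 + nnodes t) ts)"

definition Tn :: "nat \<Rightarrow> ptree set" where
  "Tn n = {T. nnodes T = n}"

definition parent :: "nat \<Rightarrow> real set \<Rightarrow> nat \<Rightarrow> nat" where
  "parent n S i = Max {j. j \<le> n \<and> xpt S j + 1 < xpt S i}"

text \<open>Children of v_k, listed left to right by decreasing index.
  (The condition k < i is automatic for a parent, and ensures termination.)\<close>
definition children :: "nat \<Rightarrow> real set \<Rightarrow> nat \<Rightarrow> nat list" where
  "children n S k = filter (\<lambda>i. k < i \<and> parent n S i = k) (rev [1..<Suc n])"

function build :: "nat \<Rightarrow> real set \<Rightarrow> nat \<Rightarrow> ptree" where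
  "build n S k = Node (map (build n S) (children n S k))"
  by pat_completeness auto
termination
  by (relation "measure (\<lambda>(n, S, k). Suc n - k)") (auto simp: children_def)

definition Lambda_tree :: "nat \<Rightarrow> real set \<Rightarrow> ptree" where
  "Lambda_tree n S = build n S 0"

definition Lambda_poset :: "nat \<Rightarrow> (nat \<times> nat) set set \<Rightarrow> ptree" where
  "Lambda_poset n C = Lambda_tree n (SOME S. S \<in> starting_sets n \<and> uip_order n S \<in> C)"

fun maxch :: "ptree \<Rightarrow> nat" where
  "maxch (Node ts) = Max (set (length ts # map maxch ts))"

text \<open>coords m d \<sigma> T: values x_u for the non-root nodes u of the subtree T, whose root
  is at depth d with partial sum \<sigma>. In coordsL, k is c(u) for the head child
  (position counted from right to left).\<close>
fun coords :: "nat \<Rightarrow> nat \<Rightarrow> real \<Rightarrow> ptree \<Rightarrow> real list"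
and coordsL :: "nat \<Rightarrow> nat \<Rightarrow> real \<Rightarrow> nat \<Rightarrow> ptree list \<Rightarrow> real list" where
  "coords m d \<sigma> (Node ts) = coordsL m d \<sigma> (length ts) ts"
| "coordsL m d \<sigma> k [] = []"
| "coordsL m d \<sigma> k (t # ts) =
     (let \<sigma>' = \<sigma> + real k / (real m + 2) ^ (Suc d)
      in (real (Suc d) + \<sigma>') # coords m (Suc d) \<sigma>' t) @ coordsL m d \<sigma> (k - 1) ts"

definition Xi_set :: "ptree \<Rightarrow> real set" where
  "Xi_set T = set (coords (maxch T) 0 0 T)"

definition Xi_poset :: "nat \<Rightarrow> ptree \<Rightarrow> (nat \<times> nat) set set" where
  "Xi_poset n T = iso_rel n `` {uip_order n (Xi_set T)}"

end

theory Submission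
  imports Defs
begin

text \<open>
  Write \<open>p(i)\<close> for the index of the parent of \<open>v\<^sub>i\<close> in \<open>\<Lambda>(S)\<close>. Since the \<open>x\<^sub>i\<close> increase,
  \<open>i \<prec>\<^sub>S j\<close> holds iff \<open>i \<le> p(j)\<close>, so the order, the function \<open>p\<close> and the tree determine each
  other as soon as \<open>p\<close> can be recovered. Now \<open>p\<close> is monotone with \<open>p(i) < i\<close>, so it is
  determined by its fibre sizes, i.e. by the numbers of children of \<open>v\<^sub>0, \<dots>, v\<^sub>n\<close>. These are
  preserved by poset isomorphisms (an isomorphism maps the strict down-set \<open>{1, \<dots>, p(j)}\<close> of
  \<open>j\<close> onto that of its image), and they are read off the tree, because the children of each node
  form an interval of indices, so that a breadth-first traversal visits \<open>v\<^sub>0, \<dots>, v\<^sub>n\<close> in order.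

  For \<open>\<Lambda>(\<Xi>(T)) = T\<close>: \<open>x\<^sub>u\<close> lies in \<open>[d(u), d(u) + 1)\<close> and exceeds the coordinate of the
  parent of \<open>u\<close> by more than \<open>1\<close>, but that of any node at depth \<open>d(u) - 1\<close> to the right of the
  parent by less than \<open>1\<close>. Hence the parent of \<open>u\<close> in \<open>\<Lambda>(\<Xi>(T))\<close> is its parent in \<open>T\<close>, and
  siblings keep their left-to-right order.
\<close>

declare build.simps [simp del]

section \<open>Starting sets and the parent function\<close>

locale starting_set =
  fixes n :: nat and S :: "real set"
  assumes finite: "finite S" and card: "card S = n"
begin

lemma xpt_strict_mono:
  assumes "i < j" "j \<le> n"
  shows "xpt S i < xpt S j"
proof -
  let ?L = "sorted_list_of_set S"
  have len: "length ?L = n" using finite card by simp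
  have sorted: "sorted_wrt (<) ?L" by simp
  show ?thesis
  proof (cases "i = 0")
    case True
    have "?L ! 0 \<le> ?L ! (j - 1)"
      using sorted len assms by (intro sorted_nth_mono) (auto simp: strict_sorted_iff)
    then show ?thesis using True assms by (simp add: xpt_def)
  next
    case False
    then show ?thesis
      using sorted_wrt_nth_less[OF sorted, of "i - 1" "j - 1"] len assms by (simp add: xpt_def)
  qed
qed

lemma xpt_less_iff: "i \<le> n \<Longrightarrow> j \<le> n \<Longrightarrow> xpt S i < xpt S j \<longleftrightarrow> i < j"
  using xpt_strict_mono[of i j] xpt_strict_mono[of j i] by (cases i j rule: linorder_cases) auto

lemma xpt_le_iff: "i \<le> n \<Longrightarrow> j \<le> n \<Longrightarrow> xpt S i \<le> xpt S j \<longleftrightarrow> i \<le> j"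
  using xpt_less_iff[of j i] by (simp add: not_less[symmetric])

lemma xpt_image: "xpt S ` {1..n} = S"
proof -
  let ?L = "sorted_list_of_set S"
  have "xpt S ` {1..n} = (\<lambda>i. ?L ! i) ` {..<n}"
    by (force simp: xpt_def image_def intro: bexI[of _ "Suc _"])
  also have "\<dots> = set ?L" using finite card by (auto simp: set_conv_nth)
  finally show ?thesis using finite by simp
qed

lemma xpt_0_notin: "xpt S 0 \<notin> S"
proof
  assume "xpt S 0 \<in> S"
  then obtain j where "j \<in> {1..n}" "xpt S 0 = xpt S j" by (metis imageE xpt_image)
  then show False using xpt_strict_mono[of 0 j] by simp
qed

lemma inj_on_xpt: "inj_on (xpt S) {0..n}"
proof (rule inj_onI)
  fix i j assume "i \<in> {0..n}" "j \<in> {0..n}" "xpt S i = xpt S j"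
  then show "i = j" using xpt_le_iff[of i j] xpt_le_iff[of j i] by auto
qed

lemma xpt_1_le:
  assumes "z \<in> S"
  shows "xpt S 1 \<le> z"
proof -
  obtain j where "j \<in> {1..n}" "z = xpt S j" using assms by (metis imageE xpt_image)
  then show ?thesis using xpt_le_iff[of 1 j] by simp
qed

lemma parent_bounds:
  assumes "i \<in> {1..n}"
  shows "parent n S i \<le> n" "xpt S (parent n S i) + 1 < xpt S i"
proof -
  let ?A = "{j. j \<le> n \<and> xpt S j + 1 < xpt S i}"
  have "xpt S 1 \<le> xpt S i" using assms xpt_le_iff[of 1 i] by auto
  then have "0 \<in> ?A" by (simp add: xpt_def)
  then have "parent n S i \<in> ?A" unfolding parent_def by (intro Max_in) auto
  then show "parent n S i \<le> n" "xpt S (parent n S i) + 1 < xpt S i" by simp_all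
qed

lemma parent_greatest: "j \<le> n \<Longrightarrow> xpt S j + 1 < xpt S i \<Longrightarrow> j \<le> parent n S i"
  unfolding parent_def by (intro Max_ge) auto

lemma parent_less: "i \<in> {1..n} \<Longrightarrow> parent n S i < i"
  using parent_bounds[of i] xpt_less_iff[of "parent n S i" i] by auto

lemma le_parent_iff:
  assumes "i \<le> n" "j \<in> {1..n}"
  shows "i \<le> parent n S j \<longleftrightarrow> xpt S i + 1 < xpt S j"
  using parent_bounds[OF assms(2)] parent_greatest[OF assms(1)] xpt_le_iff[of i "parent n S j"]
    assms by fastforce

lemma mono_on_parent: "mono_on {1..n} (parent n S)"
proof (rule mono_onI)
  fix i i' assume "i \<in> {1..n}" "i' \<in> {1..n}" "i \<le> i'"
  then have "xpt S (parent n S i) + 1 < xpt S i'"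
    using parent_bounds[of i] xpt_le_iff[of i i'] by fastforce
  then show "parent n S i \<le> parent n S i'"
    using \<open>i \<in> {1..n}\<close> by (intro parent_greatest parent_bounds(1))
qed

lemma uip_order_iff:
  "(i, j) \<in> uip_order n S \<longleftrightarrow> i \<in> {1..n} \<and> j \<in> {1..n} \<and> (i = j \<or> i \<le> parent n S j)"
  unfolding uip_order_def using le_parent_iff by auto

lemma strict_downset_eq:
  "j \<in> {1..n} \<Longrightarrow> {i\<in>{1..n}. (i, j) \<in> uip_order n S \<and> i \<noteq> j} = {1..parent n S j}"
  using parent_less[of j] by (auto simp: uip_order_iff)

end

lemma starting_sets_iff: "S \<in> starting_sets n \<longleftrightarrow> starting_set n S"
  by (simp add: starting_sets_def starting_set_def)

section \<open>Monotone maps and their fibres\<close>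

definition count_below :: "nat \<Rightarrow> (nat \<Rightarrow> nat) \<Rightarrow> nat \<Rightarrow> nat" where
  "count_below n p k = card {i\<in>{1..n}. p i < k}"

lemma count_below_0 [simp]: "count_below n p 0 = 0"
  by (simp add: count_below_def)

lemma count_below_Suc: "count_below n p (Suc k) = count_below n p k + card {i\<in>{1..n}. p i = k}"
proof -
  have "{i\<in>{1..n}. p i < Suc k} = {i\<in>{1..n}. p i < k} \<union> {i\<in>{1..n}. p i = k}" by auto
  moreover have "card ({i\<in>{1..n}. p i < k} \<union> {i\<in>{1..n}. p i = k})
      = card {i\<in>{1..n}. p i < k} + card {i\<in>{1..n}. p i = k}"
    by (rule card_Un_disjoint) auto
  ultimately show ?thesis unfolding count_below_def by simp
qed

lemma count_below_eq_sum_fibres: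
  "count_below n p k = (\<Sum>j<k. card {i\<in>{1..n}. p i = j})"
  by (induction k) (simp_all add: count_below_Suc)

lemma mono_on_set_less_eq_interval:
  assumes "mono_on {1..n} p"
  shows "{i\<in>{1..n}. p i < k} = {1..count_below n p k}"
proof -
  let ?A = "{i\<in>{1..n}. p i < k}"
  have down: "i' \<in> ?A" if "i \<in> ?A" "1 \<le> i'" "i' \<le> i" for i i'
    using that mono_onD[OF assms, of i' i] by auto
  show ?thesis
  proof (cases "?A = {}")
    case False
    have fin: "finite ?A" by simp
    have "?A \<subseteq> {1..Max ?A}" using Max_ge[OF fin] by auto
    moreover have "{1..Max ?A} \<subseteq> ?A" by (intro subsetI down[OF Max_in[OF fin False]]) auto
    ultimately have "?A = {1..Max ?A}" by (rule subset_antisym)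
    then show ?thesis unfolding count_below_def by (metis card_atLeastAtMost diff_Suc_1)
  qed (simp add: count_below_def)
qed

lemma mono_on_less_iff_le_count_below:
  assumes "mono_on {1..n} p" "i \<in> {1..n}"
  shows "p i < k \<longleftrightarrow> i \<le> count_below n p k"
  using mono_on_set_less_eq_interval[OF assms(1), of k] assms(2)
  by (metis (no_types, lifting) atLeastAtMost_iff mem_Collect_eq)

lemma mono_on_eq_if_fibre_card_eq:
  fixes n :: nat
    and p q :: "nat \<Rightarrow> nat"
  assumes p: "mono_on {1..n} p" and q: "mono_on {1..n} q"
    and fibres: "\<And>j. card {i\<in>{1..n}. p i = j} = card {i\<in>{1..n}. q i = j}"
    and i: "i \<in> {1..n}"
  shows "p i = q i"
proof -
  have count: "count_below n p k = count_below n q k" for k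
    by (simp only: count_below_eq_sum_fibres fibres)
  have "\<not> p i < q i" "\<not> q i < p i"
    using mono_on_less_iff_le_count_below[OF p i] mono_on_less_iff_le_count_below[OF q i] count
    by (metis order_less_irrefl)+
  then show ?thesis by simp
qed

section \<open>Isomorphism invariance\<close>

lemma bij_betw_image_Collect:
  assumes "bij_betw f A A"
  shows "f ` {i\<in>A. P (f i)} = {i\<in>A. P i}"
  using assms by (auto simp: bij_betw_def)

lemma poset_iso_parent_eq:
  assumes S: "starting_set n S" and S': "starting_set n S'"
    and iso: "poset_iso n (uip_order n S) (uip_order n S')" and i: "i \<in> {1..n}"
  shows "parent n S i = parent n S' i"
proof -
  interpret S: starting_set n S by (fact S)
  interpret S': starting_set n S' by (fact S')
  obtain f where f: "bij_betw f {1..n} {1..n}"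
    and pres: "\<And>i j. i \<in> {1..n} \<Longrightarrow> j \<in> {1..n} \<Longrightarrow>
                 (i, j) \<in> uip_order n S \<longleftrightarrow> (f i, f j) \<in> uip_order n S'"
    using iso unfolding poset_iso_def by blast
  have inj: "inj_on f {1..n}" using f by (rule bij_betw_imp_inj_on)
  have card_image: "card (f ` A) = card A" if "A \<subseteq> {1..n}" for A
    using card_image[OF inj_on_subset[OF inj that]] .
  have parent_f: "parent n S' (f j) = parent n S j" if j: "j \<in> {1..n}" for j
  proof -
    have fj: "f j \<in> {1..n}" using f j by (auto simp: bij_betw_def)
    have "{1..parent n S j} = {i\<in>{1..n}. (f i, f j) \<in> uip_order n S' \<and> f i \<noteq> f j}"
      unfolding S.strict_downset_eq[OF j, symmetric]
      using pres[OF _ j] inj_on_eq_iff[OF inj _ j] by blast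
    moreover have "f ` {i\<in>{1..n}. (f i, f j) \<in> uip_order n S' \<and> f i \<noteq> f j} = {1..parent n S' (f j)}"
      unfolding S'.strict_downset_eq[OF fj, symmetric]
      by (rule bij_betw_image_Collect[OF f, of "\<lambda>i. (i, f j) \<in> uip_order n S' \<and> i \<noteq> f j"])
    ultimately have "f ` {1..parent n S j} = {1..parent n S' (f j)}" by simp
    then show ?thesis
      using card_image[of "{1..parent n S j}"] S.parent_less[OF j] j by auto
  qed
  have "card {i\<in>{1..n}. parent n S i = k} = card {i\<in>{1..n}. parent n S' i = k}" for k
  proof -
    have "card {i\<in>{1..n}. parent n S i = k} = card (f ` {i\<in>{1..n}. parent n S i = k})"
      by (rule card_image[symmetric]) auto
    also have "f ` {i\<in>{1..n}. parent n S i = k} = f ` {i\<in>{1..n}. parent n S' (f i) = k}"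
      by (rule arg_cong[where f = "image f"]) (auto simp: parent_f)
    also have "\<dots> = {i\<in>{1..n}. parent n S' i = k}" by (rule bij_betw_image_Collect[OF f])
    finally show ?thesis .
  qed
  then show ?thesis
    using mono_on_eq_if_fibre_card_eq[OF S.mono_on_parent S'.mono_on_parent _ i] by blast
qed

lemma set_children: "set (children n S k) = {i\<in>{1..n}. k < i \<and> parent n S i = k}"
  by (auto simp: children_def)

lemma build_cong:
  assumes "\<And>i. i \<in> {1..n} \<Longrightarrow> parent n S i = parent n S' i"
  shows "build n S k = build n S' k"
proof (induction k rule: measure_induct_rule[where f = "\<lambda>k. Suc n - k"])
  case (less k)
  have children: "children n S k = children n S' k"
    unfolding children_def using assms by (intro filter_cong) auto
  have "build n S i = build n S' i" if "i \<in> set (children n S k)" for i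
    using that by (intro less) (auto simp: set_children)
  then show ?case by (subst (1 2) build.simps) (simp add: children)
qed

lemma poset_iso_Lambda_tree_eq:
  assumes "starting_set n S" "starting_set n S'" "poset_iso n (uip_order n S) (uip_order n S')"
  shows "Lambda_tree n S = Lambda_tree n S'"
  unfolding Lambda_tree_def using poset_iso_parent_eq[OF assms] by (rule build_cong)

section \<open>Recovering the parent function from the tree\<close>

lemma nnodes_Node: "nnodes (Node ts) = length ts + sum_list (map nnodes ts)"
  by (induction ts) auto

text \<open>On \<open>Lambda_tree\<close> this traversal visits \<open>v\<^sub>0, \<dots>, v\<^sub>n\<close> in order of index.\<close>
function bfs_degrees :: "ptree list \<Rightarrow> nat list" where
  "bfs_degrees [] = []"
| "bfs_degrees (Node ts # q) = length ts # bfs_degrees (q @ rev ts)"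
  by pat_completeness auto
termination
  by (relation "measure (\<lambda>q. sum_list (map size q))")
    (simp_all add: size_list_conv_sum_list flip: rev_map)

lemma sum_list_bfs_degrees: "sum_list (bfs_degrees q) = sum_list (map nnodes q)"
  by (induction q rule: bfs_degrees.induct)
    (simp_all add: nnodes_Node del: nnodes.simps flip: rev_map)

context starting_set
begin

lemma children_interval:
  "rev (children n S k) =
     [Suc (count_below n (parent n S) k)..<Suc (count_below n (parent n S) (Suc k))]"
proof (rule sorted_distinct_set_unique)
  have "set (rev (children n S k)) =
      {i\<in>{1..n}. parent n S i < Suc k} - {i\<in>{1..n}. parent n S i < k}"
    using parent_less by (auto simp: set_children less_Suc_eq)
  also have "\<dots> =
      set [Suc (count_below n (parent n S) k)..<Suc (count_below n (parent n S) (Suc k))]"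
    unfolding mono_on_set_less_eq_interval[OF mono_on_parent] by auto
  finally show "set (rev (children n S k)) = \<dots>" .
  show "sorted (rev (children n S k))" "distinct (rev (children n S k))"
    by (simp_all add: children_def rev_filter sorted_wrt_filter del: upt_Suc)
qed (simp_all del: upt_Suc)

lemma count_below_parent_full: "n \<le> k \<Longrightarrow> count_below n (parent n S) k = n"
proof -
  assume "n \<le> k"
  then have "{i\<in>{1..n}. parent n S i < k} = {1..n}" using parent_less by fastforce
  then show ?thesis by (simp add: count_below_def)
qed

lemma le_count_below_parent: "k \<le> n \<Longrightarrow> k \<le> count_below n (parent n S) k"
  using mono_on_less_iff_le_count_below[OF mono_on_parent, of k k] parent_less[of k]
  by (cases "k = 0") auto

text \<open>When \<open>v\<^sub>k\<close> is visited, the breadth-first queue consists of the nodes of index at least \<open>k\<close>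
  whose parent has index below \<open>k\<close>.\<close>
lemma bfs_degrees_build:
  assumes "k \<le> Suc n"
  shows "bfs_degrees (map (build n S) [k..<Suc (count_below n (parent n S) k)]) =
         map (\<lambda>j. card {i\<in>{1..n}. parent n S i = j}) [k..<Suc n]"
  using assms
proof (induction "Suc n - k" arbitrary: k)
  case 0
  then show ?case using count_below_parent_full[of k] by simp
next
  case (Suc d)
  let ?c = "count_below n (parent n S)"
  have k: "k \<le> n" using Suc by simp
  have queue: "[Suc k..<Suc (?c k)] @ rev (children n S k) = [Suc k..<Suc (?c (Suc k))]"
    using le_count_below_parent[OF k] count_below_Suc[of n "parent n S" k]
    using upt_add_eq_append[of "Suc k" "Suc (?c k)" "card {i\<in>{1..n}. parent n S i = k}"]
    by (simp add: children_interval del: upt_Suc)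
  have degree: "length (children n S k) = card {i\<in>{1..n}. parent n S i = k}"
    using length_rev[of "children n S k"]
    by (simp add: children_interval count_below_Suc del: upt_Suc)
  have "[k..<Suc (?c k)] = k # [Suc k..<Suc (?c k)]" "[k..<Suc n] = k # [Suc k..<Suc n]"
    using le_count_below_parent[OF k] k by (simp_all add: upt_conv_Cons del: upt_Suc)
  moreover have "build n S k = Node (map (build n S) (children n S k))" by (simp add: build.simps)
  ultimately show ?case
    using Suc(1)[of "Suc k"] Suc(2) queue degree
    by (simp add: rev_map flip: map_append del: upt_Suc)
qed

lemma bfs_degrees_Lambda_tree:
  "bfs_degrees [Lambda_tree n S] = map (\<lambda>j. card {i\<in>{1..n}. parent n S i = j}) [0..<Suc n]"
  using bfs_degrees_build[of 0] by (simp add: Lambda_tree_def)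

lemma nnodes_Lambda_tree: "nnodes (Lambda_tree n S) = n"
proof -
  have "nnodes (Lambda_tree n S) = (\<Sum>j<Suc n. card {i\<in>{1..n}. parent n S i = j})"
    using sum_list_bfs_degrees[of "[Lambda_tree n S]"]
    by (simp add: bfs_degrees_Lambda_tree sum_list_sum_nth atLeast0LessThan del: upt_Suc)
  also have "\<dots> = n"
    unfolding count_below_eq_sum_fibres[symmetric] by (rule count_below_parent_full) simp
  finally show ?thesis .
qed

end

lemma Lambda_tree_eq_imp_parent_eq:
  assumes S: "starting_set n S" and S': "starting_set n S'"
    and eq: "Lambda_tree n S = Lambda_tree n S'" and i: "i \<in> {1..n}"
  shows "parent n S i = parent n S' i"
proof -
  interpret S: starting_set n S by (fact S)
  interpret S': starting_set n S' by (fact S')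
  have "card {i\<in>{1..n}. parent n S i = j} = card {i\<in>{1..n}. parent n S' i = j}" for j
  proof (cases "j \<le> n")
    case True
    then show ?thesis
      using arg_cong[OF eq, of "\<lambda>T. bfs_degrees [T] ! j"]
      by (simp add: S.bfs_degrees_Lambda_tree S'.bfs_degrees_Lambda_tree del: upt_Suc)
  next
    case False
    then have "{i\<in>{1..n}. parent n S i = j} = {}" "{i\<in>{1..n}. parent n S' i = j} = {}"
      using S.parent_less S'.parent_less by force+
    then show ?thesis by (simp only: card.empty)
  qed
  then show ?thesis
    using mono_on_eq_if_fibre_card_eq[OF S.mono_on_parent S'.mono_on_parent _ i] by blast
qed

lemma Lambda_tree_eq_imp_uip_order_eq:
  assumes S: "starting_set n S" and S': "starting_set n S'"
    and eq: "Lambda_tree n S = Lambda_tree n S'"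
  shows "uip_order n S = uip_order n S'"
proof (intro set_eqI)
  fix ij :: "nat \<times> nat"
  show "ij \<in> uip_order n S \<longleftrightarrow> ij \<in> uip_order n S'"
    using Lambda_tree_eq_imp_parent_eq[OF S S' eq]
    by (cases ij) (auto simp: starting_set.uip_order_iff[OF S] starting_set.uip_order_iff[OF S'])
qed

section \<open>Addresses of nodes\<close>

text \<open>A node is addressed by the list \<open>[c(u\<^sub>1), \<dots>, c(u\<^sub>d)]\<close> along its root path. \<open>addrs T\<close>
  lists the addresses of the non-root nodes in the order in which \<open>coords\<close> lists their
  coordinates; \<open>addrs_list k ts\<close> does the same for a forest whose first tree has \<open>c = k\<close>.\<close>
fun addrs :: "ptree \<Rightarrow> nat list list"
  and addrs_list :: "nat \<Rightarrow> ptree list \<Rightarrow> nat list list" where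
  "addrs (Node ts) = addrs_list (length ts) ts"
| "addrs_list k [] = []"
| "addrs_list k (t # ts) = ([k] # map ((#) k) (addrs t)) @ addrs_list (k - 1) ts"

definition addresses :: "ptree \<Rightarrow> nat list set" where
  "addresses T = insert [] (set (addrs T))"

fun subtree :: "ptree \<Rightarrow> nat list \<Rightarrow> ptree" where
  "subtree t [] = t"
| "subtree (Node ts) (c # a) = subtree (ts ! (length ts - c)) a"

lemma Nil_mem_addresses [simp]: "[] \<in> addresses T"
  by (simp add: addresses_def)

lemma set_addrs_list:
  "set (addrs_list k ts) = (\<Union>j<length ts. (#) (k - j) ` addresses (ts ! j))"
proof (induction ts arbitrary: k)
  case (Cons t ts)
  have "(\<Union>j<length (t # ts). (#) (k - j) ` addresses ((t # ts) ! j))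
      = (#) k ` addresses t \<union> (\<Union>j<length ts. (#) (k - 1 - j) ` addresses (ts ! j))"
    by (simp add: lessThan_Suc_eq_insert_0 UN_insert image_Suc_lessThan[symmetric]
        del: image_Suc_lessThan)
  then show ?case using Cons by (simp add: addresses_def)
qed simp

lemma Cons_mem_addresses_iff:
  "c # a \<in> addresses (Node ts) \<longleftrightarrow> 1 \<le> c \<and> c \<le> length ts \<and> a \<in> addresses (ts ! (length ts - c))"
proof -
  have "c # a \<in> addresses (Node ts) \<longleftrightarrow> c # a \<in> set (addrs_list (length ts) ts)"
    by (simp add: addresses_def)
  also have "\<dots> \<longleftrightarrow> (\<exists>j<length ts. c = length ts - j \<and> a \<in> addresses (ts ! j))"
    by (auto simp: set_addrs_list)
  also have "\<dots> \<longleftrightarrow> 1 \<le> c \<and> c \<le> length ts \<and> a \<in> addresses (ts ! (length ts - c))"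
    by (auto intro!: exI[of _ "length ts - c"])
  finally show ?thesis .
qed

lemma Nil_notin_addrs: "[] \<notin> set (addrs T)"
  by (cases T) (auto simp: set_addrs_list)

lemma addresses_prefix: "pre @ a \<in> addresses T \<Longrightarrow> pre \<in> addresses T"
proof (induction pre arbitrary: T)
  case (Cons c pre)
  then show ?case by (cases T) (simp add: Cons_mem_addresses_iff)
qed simp

lemma snoc_mem_addresses_iff:
  assumes "pre \<in> addresses T" "subtree T pre = Node ts"
  shows "pre @ [c] \<in> addresses T \<longleftrightarrow> 1 \<le> c \<and> c \<le> length ts"
  using assms
proof (induction pre arbitrary: T)
  case (Cons c' pre)
  then show ?case by (cases T) (simp add: Cons_mem_addresses_iff)
qed (simp add: Cons_mem_addresses_iff)

lemma subtree_snoc: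
  assumes "pre \<in> addresses T" "subtree T pre = Node ts"
  shows "subtree T (pre @ [c]) = ts ! (length ts - c)"
  using assms
proof (induction pre arbitrary: T)
  case (Cons c' pre)
  then show ?case by (cases T) (simp add: Cons_mem_addresses_iff)
qed simp

lemma addresses_digits:
  assumes "a \<in> addresses T" "c \<in> set a"
  shows "1 \<le> c \<and> c \<le> maxch T"
  using assms
proof (induction a arbitrary: T)
  case (Cons c' a)
  obtain ts where T: "T = Node ts" by (cases T)
  let ?t = "ts ! (length ts - c')"
  have c': "1 \<le> c'" "c' \<le> length ts" "a \<in> addresses ?t"
    using Cons.prems(1) by (auto simp: T Cons_mem_addresses_iff)
  then have "maxch ?t \<le> maxch T" "length ts \<le> maxch T"
    by (auto simp: T intro!: Max_ge)
  then show ?case using Cons c' by force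
qed simp

lemma length_addrs:
  "length (addrs t) = nnodes t"
  "length (addrs_list k ts) = sum_list (map (\<lambda>t. 1 + nnodes t) ts)"
  by (induction t and k ts rule: addrs_addrs_list.induct) auto

lemma distinct_addrs: "distinct (addrs t)" "length ts \<le> k \<Longrightarrow> distinct (addrs_list k ts)"
proof (induction t and k ts rule: addrs_addrs_list.induct)
  case (3 k t ts)
  have "hd a \<le> k - 1" if "a \<in> set (addrs_list (k - 1) ts)" for a
    using that by (auto simp: set_addrs_list)
  then have "a \<notin> set ([k] # map ((#) k) (addrs t))" if "a \<in> set (addrs_list (k - 1) ts)" for a
    using that 3(3) by fastforce
  then show ?case using 3 Nil_notin_addrs[of t] by (auto simp: distinct_map)
qed auto

section \<open>Coordinates\<close>

definition nat_of_digits :: "nat \<Rightarrow> nat list \<Rightarrow> nat" where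
  "nat_of_digits B a = foldl (\<lambda>x c. B * x + c) 0 a"

definition coord :: "nat \<Rightarrow> nat list \<Rightarrow> real" where
  "coord B a = real (length a) + real (nat_of_digits B a) / real B ^ length a"

lemma nat_of_digits_Nil [simp]: "nat_of_digits B [] = 0"
  by (simp add: nat_of_digits_def)

lemma nat_of_digits_snoc [simp]: "nat_of_digits B (a @ [c]) = B * nat_of_digits B a + c"
  by (simp add: nat_of_digits_def)

lemma coords_eq_map_coord:
  "\<forall>pre. d = length pre \<longrightarrow> \<sigma> = real (nat_of_digits (m + 2) pre) / (real m + 2) ^ d \<longrightarrow>
     coords m d \<sigma> t = map (\<lambda>a. coord (m + 2) (pre @ a)) (addrs t)"
  "\<forall>pre. d = length pre \<longrightarrow> \<sigma> = real (nat_of_digits (m + 2) pre) / (real m + 2) ^ d \<longrightarrow>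
     coordsL m d \<sigma> k ts = map (\<lambda>a. coord (m + 2) (pre @ a)) (addrs_list k ts)"
proof (induction m d \<sigma> t and m d \<sigma> k ts rule: coords_coordsL.induct)
  case (3 m d \<sigma> k t ts)
  show ?case
  proof (intro allI impI)
    fix pre assume d: "d = length pre"
      and \<sigma>: "\<sigma> = real (nat_of_digits (m + 2) pre) / (real m + 2) ^ d"
    define \<sigma>' where "\<sigma>' = \<sigma> + real k / (real m + 2) ^ Suc d"
    have frac: "N / q + K / (B * q) = (B * N + K) / (B * q)" if "B > 0" "q > 0" for N q K B :: real
      using that by (simp add: field_simps)
    have \<sigma>': "\<sigma>' = real (nat_of_digits (m + 2) (pre @ [k])) / (real m + 2) ^ Suc d"
      unfolding \<sigma>'_def \<sigma> power_Suc by (subst frac) (auto simp: algebra_simps)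
    have "real (Suc d) + \<sigma>' = coord (m + 2) (pre @ [k])"
      by (simp add: \<sigma>' coord_def d algebra_simps)
    moreover have "coords m (Suc d) \<sigma>' t = map (\<lambda>a. coord (m + 2) ((pre @ [k]) @ a)) (addrs t)"
      by (rule 3(1)[OF \<sigma>'_def, rule_format]) (simp_all add: \<sigma>' d)
    moreover have "coordsL m d \<sigma> (k - 1) ts = map (\<lambda>a. coord (m + 2) (pre @ a)) (addrs_list (k - 1) ts)"
      using 3(2) \<sigma> d by blast
    ultimately show "coordsL m d \<sigma> k (t # ts) = map (\<lambda>a. coord (m + 2) (pre @ a)) (addrs_list k (t # ts))"
      unfolding coordsL.simps Let_def \<sigma>'_def[symmetric] by (simp add: comp_def)
  qed
qed simp_all

lemma Xi_set_eq: "Xi_set T = coord (maxch T + 2) ` set (addrs T)"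
  using coords_eq_map_coord(1)[of 0 0 "maxch T" T] by (simp add: Xi_set_def)

lemma nat_of_digits_less: "set a \<subseteq> {..<B} \<Longrightarrow> nat_of_digits B a < B ^ length a"
proof (induction a rule: rev_induct)
  case (snoc c a)
  then have "nat_of_digits B a + 1 \<le> B ^ length a" "c < B" by auto
  then have "B * nat_of_digits B a + c < B * (nat_of_digits B a + 1)" by simp
  also have "\<dots> \<le> B * B ^ length a" using \<open>nat_of_digits B a + 1 \<le> _\<close> by (rule mult_le_mono2)
  finally show ?case by simp
qed simp

lemma power_length_pos_if_digits:
  fixes B :: nat
  assumes "set a \<subseteq> {..<B}"
  shows "0 < B ^ length a"
  using nat_of_digits_less[OF assms] by (rule le_less_trans[OF le0])

lemma coord_bounds:
  assumes "set a \<subseteq> {..<B}"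
  shows "real (length a) \<le> coord B a" "coord B a < real (length a) + 1"
proof -
  have "real (nat_of_digits B a) < real B ^ length a"
    using nat_of_digits_less[OF assms] by (metis of_nat_less_iff of_nat_power)
  moreover have "0 < real B ^ length a"
    using power_length_pos_if_digits[OF assms] by (metis of_nat_0_less_iff of_nat_power)
  ultimately show "coord B a < real (length a) + 1" by (simp add: coord_def)
qed (simp add: coord_def)

lemma nat_of_digits_inj:
  assumes "length a = length b" "set a \<subseteq> {..<B}" "set b \<subseteq> {..<B}"
    "nat_of_digits B a = nat_of_digits B b"
  shows "a = b"
  using assms
proof (induction a arbitrary: b rule: rev_induct)
  case (snoc c a)
  obtain b' d where b: "b = b' @ [d]" using snoc.prems(1) by (cases b rule: rev_exhaust) auto
  have digits: "c < B" "d < B" using snoc.prems b by auto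
  have eq: "B * nat_of_digits B a + c = B * nat_of_digits B b' + d"
    using snoc.prems(4) b by simp
  have "c = d" using arg_cong[OF eq, of "\<lambda>x. x mod B"] digits by simp
  moreover have "nat_of_digits B a = nat_of_digits B b'"
    using arg_cong[OF eq, of "\<lambda>x. x div B"] digits by simp
  ultimately show ?case using snoc b by auto
qed simp

lemma coord_inj:
  assumes "set a \<subseteq> {..<B}" "set b \<subseteq> {..<B}" "coord B a = coord B b"
  shows "a = b"
proof -
  have "length a = length b"
    using coord_bounds[OF assms(1)] coord_bounds[OF assms(2)] assms(3) by linarith
  moreover from this have "nat_of_digits B a = nat_of_digits B b"
    using assms(3) power_length_pos_if_digits[OF assms(1)] power_length_pos_if_digits[OF assms(2)]
    by (auto simp: coord_def)
  ultimately show ?thesis using nat_of_digits_inj assms(1,2) by blast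
qed

lemma coord_snoc:
  assumes "0 < B"
  shows "coord B (a @ [c]) = coord B a + 1 + real c / real B ^ Suc (length a)"
  using assms by (simp add: coord_def field_simps)

lemma coord_add_one_less_snoc: "0 < B \<Longrightarrow> 1 \<le> c \<Longrightarrow> coord B a + 1 < coord B (a @ [c])"
  by (simp add: coord_snoc)

lemma coord_snoc_strict_mono: "0 < B \<Longrightarrow> c < c' \<Longrightarrow> coord B (a @ [c]) < coord B (a @ [c'])"
  by (simp add: coord_snoc divide_strict_right_mono)

lemma coord_le_if_add_one_less_snoc:
  assumes a: "set a \<subseteq> {..<B}" and a': "set a' \<subseteq> {..<B}" and c: "c < B"
    and less: "coord B a' + 1 < coord B (a @ [c])"
  shows "coord B a' \<le> coord B a"
proof -
  have B: "0 < B" using c by simp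
  have ac: "set (a @ [c]) \<subseteq> {..<B}" using a c by simp
  consider "length a' < length a" | "length a < length a'" | "length a' = length a" by linarith
  then show ?thesis
  proof cases
    case 1
    then show ?thesis using coord_bounds[OF a] coord_bounds[OF a'] by linarith
  next
    case 2
    then show ?thesis using coord_bounds[OF ac] coord_bounds[OF a'] less by simp
  next
    case 3
    let ?q = "real B ^ length a"
    have "real c / (real B * ?q) < 1 / ?q"
      using c B by (simp add: field_simps)
    moreover have "coord B a' < coord B a + real c / (real B * ?q)"
      using less by (simp add: coord_snoc[OF B])
    ultimately have "real (nat_of_digits B a') / ?q < (real (nat_of_digits B a) + 1) / ?q"
      unfolding coord_def add_divide_distrib 3 by linarith
    then have "real (nat_of_digits B a') < real (nat_of_digits B a + 1)"
      using B by (simp add: divide_less_cancel)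
    then have "nat_of_digits B a' \<le> nat_of_digits B a" by simp
    then show ?thesis using 3 B by (simp add: coord_def divide_right_mono)
  qed
qed

section \<open>Reconstructing a tree from its coordinates\<close>

locale tree_coordinates =
  fixes T :: ptree
begin

abbreviation base :: nat where "base \<equiv> maxch T + 2"

lemma digits_less_base: "a \<in> addresses T \<Longrightarrow> set a \<subseteq> {..<base}"
  using addresses_digits by fastforce

lemma card_Xi_set: "card (Xi_set T) = nnodes T"
proof -
  have "inj_on (coord base) (set (addrs T))"
  proof (rule inj_onI)
    fix a b assume "a \<in> set (addrs T)" "b \<in> set (addrs T)" "coord base a = coord base b"
    then show "a = b"
      using coord_inj[OF digits_less_base digits_less_base] by (simp add: addresses_def)
  qed
  then have "card (Xi_set T) = card (set (addrs T))"
    unfolding Xi_set_eq by (rule card_image)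
  also have "\<dots> = nnodes T" by (simp add: distinct_card distinct_addrs length_addrs)
  finally show ?thesis .
qed

lemma starting_set_Xi_set: "starting_set (nnodes T) (Xi_set T)"
  by unfold_locales (simp add: Xi_set_eq, rule card_Xi_set)

sublocale starting_set "nnodes T" "Xi_set T"
  by (rule starting_set_Xi_set)

definition node_value :: "nat list \<Rightarrow> real" where
  "node_value a = (if a = [] then xpt (Xi_set T) 0 else coord base a)"

lemma node_value_Nil: "node_value [] = xpt (Xi_set T) 0"
  by (simp add: node_value_def)

definition node_index :: "nat list \<Rightarrow> nat" where
  "node_index a = the_inv_into {0..nnodes T} (xpt (Xi_set T)) (node_value a)"

lemma bij_betw_node_value: "bij_betw node_value (addresses T) (xpt (Xi_set T) ` {0..nnodes T})"
proof -
  have "{0..nnodes T} = insert 0 {1..nnodes T}" by auto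
  then have "xpt (Xi_set T) ` {0..nnodes T} = insert (xpt (Xi_set T) 0) (Xi_set T)"
    by (simp only: image_insert xpt_image)
  moreover have "node_value ` set (addrs T) = Xi_set T"
    unfolding Xi_set_eq using Nil_notin_addrs
    by (intro image_cong[OF refl]) (auto simp: node_value_def)
  ultimately have image: "node_value ` addresses T = xpt (Xi_set T) ` {0..nnodes T}"
    by (simp only: addresses_def image_insert node_value_Nil)
  have mem: "node_value a \<in> Xi_set T \<longleftrightarrow> a \<noteq> []" if a: "a \<in> addresses T" for a
  proof (cases "a = []")
    case True
    then show ?thesis using xpt_0_notin by (simp add: node_value_def)
  next
    case False
    then show ?thesis using a by (simp add: node_value_def Xi_set_eq addresses_def)
  qed
  have "inj_on node_value (addresses T)"
  proof (rule inj_onI)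
    fix a b assume a: "a \<in> addresses T" and b: "b \<in> addresses T"
      and eq: "node_value a = node_value b"
    show "a = b"
    proof (cases "a = []")
      case True
      then show ?thesis using eq mem[OF a] mem[OF b] by metis
    next
      case False
      then have "b \<noteq> []" using eq mem[OF a] mem[OF b] by metis
      with False have "coord base a = coord base b" using eq by (simp add: node_value_def)
      then show ?thesis by (rule coord_inj[OF digits_less_base[OF a] digits_less_base[OF b]])
    qed
  qed
  with image show ?thesis by (simp add: bij_betw_def)
qed

lemma bij_betw_node_index: "bij_betw node_index (addresses T) {0..nnodes T}"
proof -
  have "bij_betw (xpt (Xi_set T)) {0..nnodes T} (xpt (Xi_set T) ` {0..nnodes T})"
    using inj_on_xpt by (simp add: bij_betw_def)
  from bij_betw_trans[OF bij_betw_node_value bij_betw_the_inv_into[OF this]]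
  have "bij_betw (the_inv_into {0..nnodes T} (xpt (Xi_set T)) \<circ> node_value) (addresses T) {0..nnodes T}" .
  moreover have "node_index = the_inv_into {0..nnodes T} (xpt (Xi_set T)) \<circ> node_value"
    by (simp add: fun_eq_iff node_index_def)
  ultimately show ?thesis by simp
qed

lemma xpt_node_index: "a \<in> addresses T \<Longrightarrow> xpt (Xi_set T) (node_index a) = node_value a"
  unfolding node_index_def
  using bij_betw_imp_surj_on[OF bij_betw_node_value] by (intro f_the_inv_into_f[OF inj_on_xpt]) auto

lemma node_index_Nil: "node_index [] = 0"
  unfolding node_index_def node_value_def by (simp add: the_inv_into_f_f[OF inj_on_xpt])

lemma node_index_le: "a \<in> addresses T \<Longrightarrow> node_index a \<le> nnodes T"
  using bij_betw_apply[OF bij_betw_node_index] by simp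

lemma node_index_less_iff:
  assumes "a \<in> addresses T" "b \<in> addresses T"
  shows "node_index a < node_index b \<longleftrightarrow> node_value a < node_value b"
  using xpt_less_iff[OF node_index_le[OF assms(1)] node_index_le[OF assms(2)]]
    xpt_node_index[OF assms(1)] xpt_node_index[OF assms(2)] by simp

lemma node_value_add_one_less_snoc:
  assumes "a @ [c] \<in> addresses T"
  shows "node_value a + 1 < node_value (a @ [c])"
proof (cases "a = []")
  case True
  have "coord base [c] \<in> Xi_set T" using assms True by (simp add: Xi_set_eq addresses_def)
  then have "xpt (Xi_set T) 1 \<le> coord base [c]" by (rule xpt_1_le)
  then show ?thesis using True by (simp add: node_value_def xpt_def)
next
  case False
  have "1 \<le> c" using addresses_digits[OF assms] by simp
  then show ?thesis using False by (simp add: node_value_def coord_add_one_less_snoc)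
qed

lemma node_index_le_iff:
  assumes "a \<in> addresses T" "b \<in> addresses T"
  shows "node_index a \<le> node_index b \<longleftrightarrow> node_value a \<le> node_value b"
  using node_index_less_iff[OF assms(2,1)] by (simp add: not_less[symmetric])

lemma node_index_pos:
  assumes "a \<in> addresses T" "a \<noteq> []"
  shows "node_index a \<in> {1..nnodes T}"
proof -
  have "node_index a \<noteq> node_index []"
    using assms inj_on_eq_iff[OF bij_betw_imp_inj_on[OF bij_betw_node_index]] by simp
  then show ?thesis using node_index_Nil node_index_le[OF assms(1)] by simp
qed

lemma node_value_le_if_add_one_less_snoc:
  assumes ac: "a @ [c] \<in> addresses T" and a': "a' \<in> addresses T"
    and less: "node_value a' + 1 < node_value (a @ [c])"
  shows "node_value a' \<le> node_value a"
proof -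
  have a: "a \<in> addresses T" using ac by (rule addresses_prefix)
  consider "a' = []" | "a' \<noteq> []" "a = []" | "a' \<noteq> []" "a \<noteq> []" by blast
  then show ?thesis
  proof cases
    case 1
    then show ?thesis using node_index_le_iff[OF a' a] node_index_Nil by simp
  next
    case 2
    have "1 \<le> length a'" using 2 by (simp add: Suc_le_eq)
    then have "1 \<le> node_value a'"
      using 2 coord_bounds(1)[OF digits_less_base[OF a']] by (simp add: node_value_def)
    moreover have "node_value (a @ [c]) < 2"
      using 2 coord_bounds(2)[OF digits_less_base[OF ac]] by (simp add: node_value_def)
    ultimately show ?thesis using less by simp
  next
    case 3
    have "c < base" using digits_less_base[OF ac] by simp
    with 3 show ?thesis
      using less coord_le_if_add_one_less_snoc[OF digits_less_base[OF a] digits_less_base[OF a']]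
      by (simp add: node_value_def)
  qed
qed

lemma parent_node_index:
  assumes b: "b \<in> addresses T" "b \<noteq> []"
  shows "parent (nnodes T) (Xi_set T) (node_index b) = node_index (butlast b)"
proof -
  define a where "a = butlast b"
  have b_eq: "a @ [last b] = b" using b(2) by (simp add: a_def)
  then have ac: "a @ [last b] \<in> addresses T" using b(1) by simp
  have a: "a \<in> addresses T" using ac by (rule addresses_prefix)
  have i: "node_index b \<in> {1..nnodes T}" using node_index_pos[OF b] .
  have key: "j \<le> parent (nnodes T) (Xi_set T) (node_index b) \<longleftrightarrow> j \<le> node_index a"
    if "j \<le> nnodes T" for j
  proof -
    have "j \<in> node_index ` addresses T"
      using that bij_betw_imp_surj_on[OF bij_betw_node_index] by simp
    then obtain a' where a': "a' \<in> addresses T" "node_index a' = j" by blast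
    have "j \<le> parent (nnodes T) (Xi_set T) (node_index b) \<longleftrightarrow> node_value a' + 1 < node_value (a @ [last b])"
      using le_parent_iff[OF that i] xpt_node_index[OF a'(1)] xpt_node_index[OF b(1)] a'(2) b_eq
      by simp
    also have "\<dots> \<longleftrightarrow> node_value a' \<le> node_value a"
    proof
      assume "node_value a' \<le> node_value a"
      then show "node_value a' + 1 < node_value (a @ [last b])"
        using node_value_add_one_less_snoc[OF ac] by linarith
    qed (rule node_value_le_if_add_one_less_snoc[OF ac a'(1)])
    also have "\<dots> \<longleftrightarrow> j \<le> node_index a" using node_index_le_iff[OF a'(1) a] a'(2) by simp
    finally show ?thesis .
  qed
  show ?thesis
    using key[of "node_index a"] key[of "parent (nnodes T) (Xi_set T) (node_index b)"]
      node_index_le[OF a] parent_bounds(1)[OF i] by (simp add: a_def)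
qed

lemma children_node_index:
  assumes pre: "pre \<in> addresses T" "subtree T pre = Node ts"
  shows "children (nnodes T) (Xi_set T) (node_index pre) =
           map (\<lambda>j. node_index (pre @ [length ts - j])) [0..<length ts]"
proof -
  let ?k = "node_index pre"
  let ?child = "\<lambda>c. node_index (pre @ [c])"
  have child_mem: "pre @ [c] \<in> addresses T \<longleftrightarrow> c \<in> {1..length ts}" for c
    using snoc_mem_addresses_iff[OF pre] by simp
  have child_mono: "?child c < ?child c'" if "c \<in> {1..length ts}" "c' \<in> {1..length ts}" "c < c'" for c c'
    using that child_mem node_index_less_iff coord_snoc_strict_mono[of base c c' pre]
    by (simp add: node_value_def)
  have "rev (children (nnodes T) (Xi_set T) ?k) = map ?child [1..<Suc (length ts)]"
  proof (rule sorted_distinct_set_unique)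
    have "sorted_wrt (<) (map ?child [1..<Suc (length ts)])"
      unfolding sorted_wrt_map
      by (rule sorted_wrt_mono_rel[OF _ sorted_wrt_upt]) (auto intro: child_mono)
    then show "sorted (map ?child [1..<Suc (length ts)])" "distinct (map ?child [1..<Suc (length ts)])"
      by (simp_all add: strict_sorted_iff del: upt_Suc)
    show "set (rev (children (nnodes T) (Xi_set T) ?k)) = set (map ?child [1..<Suc (length ts)])"
    proof (rule set_eqI)
      fix i
      have "i \<in> set (children (nnodes T) (Xi_set T) ?k) \<longleftrightarrow>
          (\<exists>b\<in>addresses T. b \<noteq> [] \<and> i = node_index b \<and> butlast b = pre)"
      proof
        assume "i \<in> set (children (nnodes T) (Xi_set T) ?k)"
        then have i: "i \<in> {1..nnodes T}" "parent (nnodes T) (Xi_set T) i = ?k"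
          by (simp_all add: set_children)
        then have "i \<in> node_index ` addresses T"
          using bij_betw_imp_surj_on[OF bij_betw_node_index] by auto
        then obtain b where b: "b \<in> addresses T" "i = node_index b" by blast
        with i have "b \<noteq> []" using node_index_Nil by auto
        with b i have "node_index (butlast b) = ?k" using parent_node_index by simp
        then have "butlast b = pre"
          using inj_on_eq_iff[OF bij_betw_imp_inj_on[OF bij_betw_node_index]] pre(1)
            addresses_prefix[of "butlast b" "[last b]"] b(1) \<open>b \<noteq> []\<close> by simp
        with b \<open>b \<noteq> []\<close> show "\<exists>b\<in>addresses T. b \<noteq> [] \<and> i = node_index b \<and> butlast b = pre" by blast
      next
        assume "\<exists>b\<in>addresses T. b \<noteq> [] \<and> i = node_index b \<and> butlast b = pre"
        then obtain b where b: "b \<in> addresses T" "b \<noteq> []" "i = node_index b" "butlast b = pre" by blast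
        then show "i \<in> set (children (nnodes T) (Xi_set T) ?k)"
          using node_index_pos[OF b(1,2)] parent_node_index[OF b(1,2)]
            parent_less[OF node_index_pos[OF b(1,2)]]
          by (simp add: set_children)
      qed
      also have "\<dots> \<longleftrightarrow> (\<exists>c\<in>{1..length ts}. i = ?child c)"
      proof
        assume "\<exists>b\<in>addresses T. b \<noteq> [] \<and> i = node_index b \<and> butlast b = pre"
        then obtain b where b: "b \<in> addresses T" "b \<noteq> []" "i = node_index b" "butlast b = pre" by blast
        define c where "c = last b"
        have "b = pre @ [c]"
          by (simp only: b(4)[symmetric] c_def append_butlast_last_id[OF b(2)])
        then show "\<exists>c\<in>{1..length ts}. i = ?child c" using b(1,3) child_mem by blast
      next
        assume "\<exists>c\<in>{1..length ts}. i = ?child c"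
        then obtain c where "c \<in> {1..length ts}" "i = ?child c" by blast
        then show "\<exists>b\<in>addresses T. b \<noteq> [] \<and> i = node_index b \<and> butlast b = pre"
          using child_mem[of c] by (intro bexI[of _ "pre @ [c]"]) simp_all
      qed
      finally show "i \<in> set (rev (children (nnodes T) (Xi_set T) ?k)) \<longleftrightarrow>
          i \<in> set (map ?child [1..<Suc (length ts)])" by auto
    qed
  qed (simp_all add: children_def rev_filter sorted_wrt_filter del: upt_Suc)
  moreover have "rev (map (\<lambda>j. ?child (length ts - j)) [0..<length ts]) = map ?child [1..<Suc (length ts)]"
    by (rule nth_equalityI) (auto simp: rev_nth simp del: upt_Suc)
  ultimately show ?thesis by (metis rev_rev_ident)
qed

lemma build_node_index:
  "pre \<in> addresses T \<Longrightarrow> subtree T pre = t \<Longrightarrow> build (nnodes T) (Xi_set T) (node_index pre) = t"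
proof (induction t arbitrary: pre)
  case (Node ts)
  have child: "build (nnodes T) (Xi_set T) (node_index (pre @ [length ts - j])) = ts ! j"
    if "j < length ts" for j
  proof (rule Node.IH)
    show "ts ! j \<in> set ts" using that by simp
    show "pre @ [length ts - j] \<in> addresses T" using snoc_mem_addresses_iff[OF Node.prems] that by simp
    then show "subtree T (pre @ [length ts - j]) = ts ! j"
      using subtree_snoc[OF Node.prems] that by simp
  qed
  have "map (\<lambda>j. build (nnodes T) (Xi_set T) (node_index (pre @ [length ts - j]))) [0..<length ts] = ts"
    by (rule nth_equalityI) (simp_all add: child)
  then show ?case
    by (subst build.simps) (simp only: children_node_index[OF Node.prems] map_map comp_def)
qed

lemma Lambda_tree_Xi_set: "Lambda_tree (nnodes T) (Xi_set T) = T"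
proof -
  have "build (nnodes T) (Xi_set T) (node_index []) = T" by (rule build_node_index) simp_all
  then show ?thesis by (simp only: Lambda_tree_def node_index_Nil)
qed

end

section \<open>Isomorphism classes\<close>

lemma poset_iso_refl: "poset_iso n R R"
  unfolding poset_iso_def by (rule exI[of _ id]) simp

lemma class_mem_Pn: "starting_set n S \<Longrightarrow> iso_rel n `` {uip_order n S} \<in> Pn n"
  unfolding Pn_def unit_interval_orders_def starting_sets_iff by (rule quotientI) blast

lemma Pn_cases:
  assumes "P \<in> Pn n"
  obtains S where "starting_set n S" "P = iso_rel n `` {uip_order n S}"
  using assms unfolding Pn_def unit_interval_orders_def starting_sets_iff by (auto elim!: quotientE)

lemma Lambda_poset_class:
  assumes S: "starting_set n S"
  shows "Lambda_poset n (iso_rel n `` {uip_order n S}) = Lambda_tree n S"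
proof -
  let ?P = "\<lambda>S'. S' \<in> starting_sets n \<and> uip_order n S' \<in> iso_rel n `` {uip_order n S}"
  have "?P S"
    using S poset_iso_refl by (auto simp: starting_sets_iff iso_rel_def unit_interval_orders_def)
  then have "?P (SOME S'. ?P S')" by (rule someI)
  then have "Lambda_tree n S = Lambda_tree n (SOME S'. ?P S')"
    using S by (intro poset_iso_Lambda_tree_eq) (auto simp: starting_sets_iff iso_rel_def)
  then show ?thesis by (simp add: Lambda_poset_def)
qed

lemma Xi_set_starting_set: "T \<in> Tn n \<Longrightarrow> starting_set n (Xi_set T)"
  unfolding Tn_def using tree_coordinates.starting_set_Xi_set by auto

lemma Lambda_tree_Xi_set: "T \<in> Tn n \<Longrightarrow> Lambda_tree n (Xi_set T) = T"
  unfolding Tn_def using tree_coordinates.Lambda_tree_Xi_set by auto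

lemma Lambda_tree_mem_Tn: "starting_set n S \<Longrightarrow> Lambda_tree n S \<in> Tn n"
  by (simp add: Tn_def starting_set.nnodes_Lambda_tree)

lemma Lambda_poset_Xi_poset: "T \<in> Tn n \<Longrightarrow> Lambda_poset n (Xi_poset n T) = T"
  by (simp add: Xi_poset_def Lambda_poset_class Xi_set_starting_set Lambda_tree_Xi_set)

lemma Xi_poset_Lambda_poset:
  assumes "P \<in> Pn n"
  shows "Xi_poset n (Lambda_poset n P) = P"
proof -
  obtain S where S: "starting_set n S" and P: "P = iso_rel n `` {uip_order n S}"
    using assms by (rule Pn_cases)
  let ?T = "Lambda_tree n S"
  have T: "?T \<in> Tn n" using S by (rule Lambda_tree_mem_Tn)
  have "uip_order n (Xi_set ?T) = uip_order n S"
    using Lambda_tree_eq_imp_uip_order_eq[OF Xi_set_starting_set[OF T] S] Lambda_tree_Xi_set[OF T]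
    by simp
  then show ?thesis by (simp add: P Lambda_poset_class[OF S] Xi_poset_def)
qed

lemma bij_betw_Lambda_poset: "bij_betw (Lambda_poset n) (Pn n) (Tn n)"
proof (rule bij_betw_byWitness[where f' = "Xi_poset n"])
  show "Lambda_poset n ` Pn n \<subseteq> Tn n"
    by (auto elim!: Pn_cases simp: Lambda_poset_class Lambda_tree_mem_Tn)
  show "Xi_poset n ` Tn n \<subseteq> Pn n"
    by (auto simp: Xi_poset_def intro!: class_mem_Pn Xi_set_starting_set)
qed (simp_all add: Xi_poset_Lambda_poset Lambda_poset_Xi_poset)

theorem mainTheorem2:
  fixes n :: nat
  assumes "n \<ge> 1"
  shows "(\<forall>S\<in>starting_sets n. \<forall>S'\<in>starting_sets n.
            poset_iso n (uip_order n S) (uip_order n S') \<longrightarrow> Lambda_tree n S = Lambda_tree n S')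
       \<and> bij_betw (Lambda_poset n) (Pn n) (Tn n)
       \<and> (\<forall>T\<in>Tn n. Xi_set T \<in> starting_sets n \<and> Xi_poset n T \<in> Pn n
                    \<and> Lambda_poset n (Xi_poset n T) = T \<and> Lambda_tree n (Xi_set T) = T)
       \<and> (\<forall>P\<in>Pn n. Xi_poset n (Lambda_poset n P) = P)"
proof (intro conjI ballI impI)
  fix S S' assume "S \<in> starting_sets n" "S' \<in> starting_sets n"
    and "poset_iso n (uip_order n S) (uip_order n S')"
  then show "Lambda_tree n S = Lambda_tree n S'"
    by (simp add: starting_sets_iff poset_iso_Lambda_tree_eq)
next
  fix T assume T: "T \<in> Tn n"
  show "Xi_set T \<in> starting_sets n" using Xi_set_starting_set[OF T] by (simp add: starting_sets_iff)
  show "Xi_poset n T \<in> Pn n"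
    unfolding Xi_poset_def using Xi_set_starting_set[OF T] by (rule class_mem_Pn)
  show "Lambda_poset n (Xi_poset n T) = T" using T by (rule Lambda_poset_Xi_poset)
  show "Lambda_tree n (Xi_set T) = T" using T by (rule Lambda_tree_Xi_set)
qed (simp_all add: bij_betw_Lambda_poset Xi_poset_Lambda_poset)

end
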